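(* Let $W,V$ be subspaces of $\mathbb{R}^n$ with $\mathbb{R}^n=W\oplus V^\perp$, where $W$ has dimension $d_W$. Suppose $\mu\in\mathcal{P}_2(W)$ is a probabilistic frame for $W$ with frame operator $\mathbf{S}_\mu$, and $T:W\to V$ is measurable such that $T_\#\mu$ is an oblique dual probabilistic frame of $\mu$ on $V$ with respect to the coupling $(\mathbf{Id},T)_\#\mu$, i.e. $T_\#\mu\in\mathcal{P}_2(V)$ and $\int_W\mathbf{x}\,T(\mathbf{x})^t\,d\mu(\mathbf{x})=\boldsymbol{\pi}_{WV^\perp}$. Then $$\int_W\int_W|\langle\mathbf{x},T(\mathbf{y})\rangle|^2\,d\mu(\mathbf{x})\,d\mu(\mathbf{y})\ge d_W,$$ and equality holds if and only if $T(\mathbf{y})=\boldsymbol{\pi}_{VW^\perp}\mathbf{S}_\mu^\dagger\mathbf{y}$ for $\mu$-almost all $\mathbf{y}\in W$.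
   Context: $\mathcal{P}_2(S)$ denotes Borel probability measures on $\mathbb{R}^n$ concentrated on the subspace $S$ with finite second moment. $\mu\in\mathcal{P}_2(W)$ is a probabilistic frame for $W$ if there exist $0<A\le B<\infty$ with $A\|\mathbf{x}\|^2\le\int_W|\langle\mathbf{x},\mathbf{y}\rangle|^2d\mu(\mathbf{y})\le B\|\mathbf{x}\|^2$ for all $\mathbf{x}\in W$; its frame operator is $\mathbf{S}_\mu=\int_W\mathbf{y}\mathbf{y}^td\mu(\mathbf{y})$, with Moore–Penrose inverse $\mathbf{S}_\mu^\dagger$. $T_\#\mu(E)=\mu(T^{-1}(E))$; $(\mathbf{Id},T)_\#\mu$ is the pushforward of $\mu$ under $\mathbf{x}\mapsto(\mathbf{x},T(\mathbf{x}))$. $\boldsymbol{\pi}_{WV^\perp}$ is the oblique projection onto $W$ along $V^\perp$ and $\boldsymbol{\pi}_{VW^\perp}$ the oblique projection onto $V$ along $W^\perp$. *)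

theory Defs
  imports "HOL-Probability.Probability"
begin

definition oblique_proj :: "(real^'n) set \<Rightarrow> (real^'n) set \<Rightarrow> real^'n^'n" where
  "oblique_proj W U = matrix (\<lambda>x. THE w. w \<in> W \<and> x - w \<in> U)"

definition mp_inverse :: "real^'n^'n \<Rightarrow> real^'n^'n" where
  "mp_inverse A = (THE B. A ** B ** A = A \<and> B ** A ** B = B \<and>
      transpose (A ** B) = A ** B \<and> transpose (B ** A) = B ** A)"

definition outer :: "real^'n \<Rightarrow> real^'n \<Rightarrow> real^'n^'n" where
  "outer x y = (\<chi> i j. x $ i * y $ j)"

definition frame_operator :: "(real^'n) measure \<Rightarrow> real^'n^'n" where
  "frame_operator \<mu> = integral\<^sup>L \<mu> (\<lambda>y. outer y y)"

definition P2 :: "(real^'n) set \<Rightarrow> (real^'n) measure \<Rightarrow> bool" where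
  "P2 S \<mu> \<longleftrightarrow> prob_space \<mu> \<and> sets \<mu> = sets borel \<and> (AE x in \<mu>. x \<in> S)
      \<and> integrable \<mu> (\<lambda>x. norm x ^ 2)"

definition prob_frame :: "(real^'n) set \<Rightarrow> (real^'n) measure \<Rightarrow> bool" where
  "prob_frame W \<mu> \<longleftrightarrow> P2 W \<mu> \<and> (\<exists>A B. 0 < A \<and> A \<le> B \<and>
      (\<forall>x\<in>W. A * norm x ^ 2 \<le> integral\<^sup>L \<mu> (\<lambda>y. \<bar>x \<bullet> y\<bar> ^ 2)
             \<and> integral\<^sup>L \<mu> (\<lambda>y. \<bar>x \<bullet> y\<bar> ^ 2) \<le> B * norm x ^ 2))"

end

theory Submission
  imports Defs
begin

(* Let S be the frame operator of mu and K = pi_(V,W^perp) S^+ the canonical dual.  The deviation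
   d(y) = (T y - K y) . S (T y - K y) is nonnegative, and for y in W it equals
   T y . S T y - 2 (T y . y) + y . S^+ y, because S annihilates W^perp, S S^+ = S^+ S = pi_W
   (the orthogonal projection onto W) and K y - S^+ y lies in W^perp.  The first term integrates to the double integral; the duality
   condition turns the second into trace pi_(W,V^perp) = dim W, and the third is
   trace (S^+ S) = trace pi_W = dim W.  So the double integral minus dim W is the integral of d,
   which vanishes iff d = 0 a.e.; and d(y) = 0 forces T y - K y into V inter W^perp = {0},
   since S is definite on W by the lower frame bound. *)

lemma outer_mult_vec: "outer u v *v x = (v \<bullet> x) *\<^sub>R u"
  by (simp add: vec_eq_iff outer_def matrix_vector_mult_def inner_vec_def
      sum_distrib_left sum_distrib_right ac_simps)

lemma trace_mult_outer: "trace (X ** outer u v) = v \<bullet> (X *v u)"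
  by (simp add: trace_def outer_def matrix_matrix_mult_def matrix_vector_mult_def inner_vec_def
      sum_distrib_left sum_distrib_right ac_simps)

lemma norm_outer: "norm (outer u v) = norm u * norm v"
proof -
  have "\<And>i. outer u v $ i = u $ i *\<^sub>R v"
    by (simp add: outer_def vec_eq_iff)
  then show ?thesis
    by (simp add: norm_vec_def[of "outer u v"] norm_vec_def[of u] L2_set_left_distrib)
qed

lemma transpose_eq_selfI:
  fixes A :: "real^'n^'n"
  assumes "\<And>x y. (A *v x) \<bullet> y = x \<bullet> (A *v y)"
  shows "transpose A = A"
proof -
  have "(\<lambda>x. transpose A *v x) = (\<lambda>x. A *v x)"
    using adjoint_matrix[of A] adjoint_unique[of "\<lambda>x. A *v x" "\<lambda>x. A *v x"] assms by simp
  then show ?thesis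
    by (simp add: matrix_eq fun_eq_iff)
qed

lemma orthogonal_comp_sum:
  assumes "0 \<in> A" "0 \<in> B"
  shows "(A + B)\<^sup>\<bottom> = A\<^sup>\<bottom> \<inter> B\<^sup>\<bottom>"
proof (intro equalityI subsetI)
  fix x assume x: "x \<in> (A + B)\<^sup>\<bottom>"
  have "orthogonal (a + b) x" if "a \<in> A" "b \<in> B" for a b
    using x that by (auto simp: orthogonal_comp_def)
  from this[of _ 0] this[of 0] show "x \<in> A\<^sup>\<bottom> \<inter> B\<^sup>\<bottom>"
    using assms by (simp add: orthogonal_comp_def)
next
  fix x assume "x \<in> A\<^sup>\<bottom> \<inter> B\<^sup>\<bottom>"
  then show "x \<in> (A + B)\<^sup>\<bottom>"
    by (auto simp: orthogonal_comp_def orthogonal_def set_plus_def inner_add_left)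
qed

lemma complementary_orthogonal_comp:
  fixes W V :: "'a::euclidean_space set"
  assumes "subspace W" "subspace V" "W \<inter> V\<^sup>\<bottom> = {0}" "W + V\<^sup>\<bottom> = UNIV"
  shows "V \<inter> W\<^sup>\<bottom> = {0}" "V + W\<^sup>\<bottom> = UNIV"
proof -
  have zero: "0 \<in> W" "0 \<in> V" "0 \<in> W\<^sup>\<bottom>" "0 \<in> V\<^sup>\<bottom>"
    using assms by (simp_all add: subspace_0 subspace_orthogonal_comp)
  have "(W + V\<^sup>\<bottom>)\<^sup>\<bottom> = W\<^sup>\<bottom> \<inter> V"
    using zero assms(1,2) by (simp add: orthogonal_comp_sum orthogonal_comp_self)
  then have "V \<inter> W\<^sup>\<bottom> = (W + V\<^sup>\<bottom>)\<^sup>\<bottom>"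
    by blast
  then show "V \<inter> W\<^sup>\<bottom> = {0}"
    using assms by simp
  have "V + W\<^sup>\<bottom> = {x + y |x y. x \<in> V \<and> y \<in> W\<^sup>\<bottom>}"
    by (auto simp: set_plus_def)
  then have "subspace (V + W\<^sup>\<bottom>)"
    using subspace_sums[OF assms(2) subspace_orthogonal_comp, of W] by simp
  moreover have "(V + W\<^sup>\<bottom>)\<^sup>\<bottom> = V\<^sup>\<bottom> \<inter> W"
    using zero assms by (simp add: orthogonal_comp_sum orthogonal_comp_self)
  then have "(V + W\<^sup>\<bottom>)\<^sup>\<bottom> = {0}"
    using assms(3) by blast
  ultimately show "V + W\<^sup>\<bottom> = UNIV"
    by (metis orthogonal_comp_self orthogonal_comp_null)
qed

locale complementary_subspaces =
  fixes A U :: "(real^'n) set"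
  assumes subspace_A: "subspace A" and subspace_U: "subspace U"
    and inter_eq_0: "A \<inter> U = {0}" and sum_eq_UNIV: "A + U = UNIV"
begin

lemma ex1_decomposition: "\<exists>!w. w \<in> A \<and> x - w \<in> U"
proof -
  obtain a u where au: "x = a + u" "a \<in> A" "u \<in> U"
    using sum_eq_UNIV set_plus_elim[of x A U] by auto
  show ?thesis
  proof (rule ex1I[of _ a])
    fix w assume w: "w \<in> A \<and> x - w \<in> U"
    have "w - a \<in> A" "w - a = u - (x - w)"
      using w au subspace_A by (auto simp: subspace_diff)
    then have "w - a \<in> A \<inter> U"
      using w au subspace_U by (metis IntI subspace_diff)
    then show "w = a"
      using inter_eq_0 by simp
  qed (use au in simp)
qed

definition component :: "real^'n \<Rightarrow> real^'n" where
  "component x = (THE w. w \<in> A \<and> x - w \<in> U)"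

lemma component: "component x \<in> A" "x - component x \<in> U"
  using theI'[OF ex1_decomposition[of x]] by (simp_all add: component_def)

lemma component_eq: "w \<in> A \<Longrightarrow> x - w \<in> U \<Longrightarrow> component x = w"
  unfolding component_def using ex1_decomposition by (rule the1_equality) simp

lemma linear_component: "linear component"
proof
  fix x y
  have "x + y - (component x + component y) = (x - component x) + (y - component y)"
    by simp
  then show "component (x + y) = component x + component y"
    using component subspace_A subspace_U by (metis component_eq subspace_add)
next
  fix c :: real and x
  have "c *\<^sub>R x - c *\<^sub>R component x = c *\<^sub>R (x - component x)"
    by (simp add: algebra_simps)
  then show "component (c *\<^sub>R x) = c *\<^sub>R component x"
    using component subspace_A subspace_U by (metis component_eq subspace_scale)
qed

lemma oblique_proj_mult_vec: "oblique_proj A U *v x = component x"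
proof -
  have "oblique_proj A U = matrix component"
    by (simp add: oblique_proj_def component_def[abs_def])
  then show ?thesis
    using linear_component by (simp add: matrix_works)
qed

lemma oblique_proj_in: "oblique_proj A U *v x \<in> A"
  and oblique_proj_diff_in: "x - oblique_proj A U *v x \<in> U"
  using component by (simp_all add: oblique_proj_mult_vec)

lemma oblique_proj_eq: "w \<in> A \<Longrightarrow> x - w \<in> U \<Longrightarrow> oblique_proj A U *v x = w"
  by (simp add: oblique_proj_mult_vec component_eq)

lemma oblique_proj_fixes: "w \<in> A \<Longrightarrow> oblique_proj A U *v w = w"
  by (rule oblique_proj_eq) (simp_all add: subspace_0[OF subspace_U])

end

abbreviation orth_proj :: "(real^'n) set \<Rightarrow> real^'n^'n" where
  "orth_proj W \<equiv> oblique_proj W (W\<^sup>\<bottom>)"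

lemma complementary_orthogonal_comp_self:
  "subspace W \<Longrightarrow> complementary_subspaces W (W\<^sup>\<bottom>)"
  by unfold_locales
    (simp_all add: subspace_orthogonal_comp orthogonal_Int_0 subspace_sum_orthogonal_comp)

lemma transpose_orth_proj:
  assumes "subspace W"
  shows "transpose (orth_proj W) = orth_proj W"
proof (rule transpose_eq_selfI)
  interpret complementary_subspaces W "W\<^sup>\<bottom>"
    using assms by (rule complementary_orthogonal_comp_self)
  fix x y
  let ?P = "orth_proj W"
  have "(?P *v x) \<bullet> (y - ?P *v y) = 0" "(x - ?P *v x) \<bullet> (?P *v y) = 0"
    using oblique_proj_in oblique_proj_diff_in
    by (auto simp: orthogonal_comp_def orthogonal_def inner_commute)
  then show "(?P *v x) \<bullet> y = x \<bullet> (?P *v y)"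
    by (simp add: inner_diff_left inner_diff_right)
qed

lemma matrix_vector_mult_sum: "sum f B *v (x::real^'n) = (\<Sum>b\<in>B. f b *v x)"
  by (induction B rule: infinite_finite_induct) (simp_all add: matrix_vector_mult_add_rdistrib)

lemma trace_mult_sum: "trace (X ** sum f B) = (\<Sum>b\<in>B. trace (X ** f b))" for X :: "real^'n^'n"
  by (induction B rule: infinite_finite_induct) (auto simp: matrix_add_ldistrib trace_add trace_def[of 0])

lemma trace_eq_dim:
  fixes X :: "real^'n^'n"
  assumes "subspace W" and into: "\<And>x. X *v x \<in> W" and fixed: "\<And>w. w \<in> W \<Longrightarrow> X *v w = w"
  shows "trace X = dim W"
proof -
  obtain Bs where Bs: "Bs \<subseteq> W" "pairwise orthogonal Bs" "\<And>b. b \<in> Bs \<Longrightarrow> norm b = 1"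
    "independent Bs" "card Bs = dim W" "span Bs = W"
    using orthonormal_basis_subspace[OF assms(1)] by metis
  have unit: "b \<bullet> b = 1" if "b \<in> Bs" for b
    using Bs(3)[OF that] by (simp add: norm_eq_1)
  define Q where "Q = (\<Sum>b\<in>Bs. outer b b)"
  have "Q *v c = c" if "c \<in> Bs" for c
  proof -
    have "Q *v c = (\<Sum>b\<in>Bs. (b \<bullet> c) *\<^sub>R b)"
      by (simp add: Q_def outer_mult_vec matrix_vector_mult_sum)
    also have "\<dots> = (\<Sum>b\<in>Bs. if b = c then b else 0)"
      using Bs(2) unit that by (intro sum.cong) (auto simp: pairwise_def orthogonal_def)
    finally show ?thesis
      using that independent_imp_finite[OF Bs(4)] by simp
  qed
  then have "Q *v w = w" if "w \<in> W" for w
    using linear_eq_on[of "(*v) Q" id w Bs] Bs(6) that by (simp add: linear_id)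
  then have "Q ** X = X"
    using into by (simp add: matrix_eq matrix_vector_mul_assoc[symmetric])
  then have "trace X = trace (X ** Q)"
    by (metis trace_mul_sym)
  also have "\<dots> = (\<Sum>b\<in>Bs. b \<bullet> b)"
    using Bs(1) fixed by (simp add: Q_def trace_mult_sum trace_mult_outer subset_iff)
  also have "\<dots> = dim W"
    using unit Bs(5) by simp
  finally show ?thesis .
qed

lemma mp_inverse_eqI:
  fixes A B :: "real^'n^'n"
  assumes "A ** B ** A = A" "B ** A ** B = B"
    and "transpose (A ** B) = A ** B" "transpose (B ** A) = B ** A"
  shows "mp_inverse A = B"
  unfolding mp_inverse_def
proof (rule the_equality)
  fix C
  assume C: "A ** C ** A = A \<and> C ** A ** C = C \<and> transpose (A ** C) = A ** C \<and>
    transpose (C ** A) = C ** A"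
  then have ACA: "A ** C ** A = A" and CAC: "C ** A ** C = C"
    and AC: "transpose (A ** C) = A ** C" and CA: "transpose (C ** A) = C ** A"
    by blast+
  have "C = C ** transpose (A ** C)"
    using CAC AC by (simp add: matrix_mul_assoc)
  also have "\<dots> = C ** transpose ((A ** B) ** (A ** C))"
    using assms(1) by (simp add: matrix_mul_assoc)
  also have "\<dots> = (C ** A ** C) ** A ** B"
    using AC assms(3) by (simp add: matrix_transpose_mul matrix_mul_assoc)
  finally have CAB: "C = C ** A ** B"
    using CAC by simp
  have "B = transpose (B ** A) ** B"
    using assms(2,4) by simp
  also have "\<dots> = transpose ((B ** A) ** (C ** A)) ** B"
    using ACA by (simp add: matrix_mul_assoc[symmetric])
  also have "\<dots> = C ** A ** (B ** A ** B)"
    using CA assms(4) by (simp add: matrix_transpose_mul matrix_mul_assoc)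
  finally show "C = B"
    using CAB assms(2) by simp
qed (use assms in blast)

context
  fixes S :: "real^'n^'n" and W :: "(real^'n) set"
  assumes subspace_W: "subspace W" and into: "\<And>x. S *v x \<in> W"
    and kernel: "\<And>z. z \<in> W\<^sup>\<bottom> \<Longrightarrow> S *v z = 0" and inj: "\<And>w. w \<in> W \<Longrightarrow> S *v w = 0 \<Longrightarrow> w = 0"
begin

lemma mult_vec_orth_proj: "S *v (orth_proj W *v x) = S *v x"
proof -
  interpret complementary_subspaces W "W\<^sup>\<bottom>"
    using subspace_W by (rule complementary_orthogonal_comp_self)
  show ?thesis
    using kernel[OF oblique_proj_diff_in[of x]] by (simp add: matrix_vector_mult_diff_distrib)
qed

lemma add_orth_proj_complement_injective:
  assumes "(S + (mat 1 - orth_proj W)) *v x = 0"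
  shows "x = 0"
proof -
  interpret complementary_subspaces W "W\<^sup>\<bottom>"
    using subspace_W by (rule complementary_orthogonal_comp_self)
  have Sx: "S *v x = - (x - orth_proj W *v x)"
    using assms by (simp add: matrix_vector_mult_add_rdistrib matrix_vector_mult_diff_rdistrib
        add_eq_0_iff2)
  then have "S *v x \<in> W\<^sup>\<bottom>"
    using subspace_neg[OF subspace_U oblique_proj_diff_in] by simp
  then have "S *v x = 0"
    using inter_eq_0 into by blast
  moreover from this have "x = orth_proj W *v x"
    using Sx by simp
  ultimately show "x = 0"
    using inj[OF oblique_proj_in] mult_vec_orth_proj by metis
qed

text \<open>\<open>N\<close> is the inverse of \<open>S + (I - \<Pi>\<^sub>W)\<close>, which acts as \<open>S\<close> on \<open>W\<close> and as the identity on
  \<open>W\<^sup>\<bottom>\<close>.\<close>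
lemma inverse_on_range:
  obtains N where "\<And>w. w \<in> W \<Longrightarrow> N *v w \<in> W" "\<And>w. w \<in> W \<Longrightarrow> S *v (N *v w) = w"
    "\<And>x. N *v (S *v x) = orth_proj W *v x"
proof -
  interpret complementary_subspaces W "W\<^sup>\<bottom>"
    using subspace_W by (rule complementary_orthogonal_comp_self)
  let ?P = "orth_proj W"
  define M where "M = S + (mat 1 - ?P)"
  have M_apply: "M *v x = S *v x + (x - ?P *v x)" for x
    by (simp add: M_def matrix_vector_mult_add_rdistrib matrix_vector_mult_diff_rdistrib)
  obtain N where NM: "N ** M = mat 1" and MN: "M ** N = mat 1"
    using add_orth_proj_complement_injective matrix_left_invertible_ker matrix_left_right_inverse
    unfolding M_def by metis
  have "N *v w \<in> W \<and> S *v (N *v w) = w" if "w \<in> W" for w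
  proof -
    have "M *v (N *v w) = w"
      using MN by (simp add: matrix_vector_mul_assoc)
    then have MNw: "S *v (N *v w) + (N *v w - ?P *v (N *v w)) = w"
      by (simp only: M_apply)
    then have "N *v w - ?P *v (N *v w) = w - S *v (N *v w)"
      by (simp add: algebra_simps)
    then have "N *v w - ?P *v (N *v w) \<in> W"
      using that into subspace_A by (simp add: subspace_diff)
    then have "N *v w - ?P *v (N *v w) = 0"
      using inter_eq_0 oblique_proj_diff_in by blast
    then show ?thesis
      using oblique_proj_in[of "N *v w"] MNw by simp
  qed
  moreover have "N *v (S *v x) = ?P *v x" for x
  proof -
    have "S *v x = M *v (?P *v x)"
      using mult_vec_orth_proj by (simp add: M_apply oblique_proj_fixes[OF oblique_proj_in])
    then show ?thesis
      using NM by (simp add: matrix_vector_mul_assoc matrix_mul_assoc)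
  qed
  ultimately show ?thesis
    using that by blast
qed

lemma mult_mp_inverse_eq_orth_proj: "S ** mp_inverse S = orth_proj W" "mp_inverse S ** S = orth_proj W"
proof -
  interpret complementary_subspaces W "W\<^sup>\<bottom>"
    using subspace_W by (rule complementary_orthogonal_comp_self)
  obtain N where N_in: "\<And>w. w \<in> W \<Longrightarrow> N *v w \<in> W" and S_N: "\<And>w. w \<in> W \<Longrightarrow> S *v (N *v w) = w"
    and N_S: "\<And>x. N *v (S *v x) = orth_proj W *v x"
    using inverse_on_range by blast
  define B where "B = N ** orth_proj W"
  have B_in: "B *v x \<in> W" for x
    using N_in[OF oblique_proj_in] by (simp add: B_def matrix_vector_mul_assoc[symmetric])
  have SB: "S ** B = orth_proj W"
    using S_N[OF oblique_proj_in] by (simp add: B_def matrix_eq matrix_vector_mul_assoc[symmetric])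
  have BS: "B ** S = orth_proj W"
    using N_S by (simp add: B_def matrix_eq oblique_proj_fixes[OF into] flip: matrix_vector_mul_assoc)
  have "mp_inverse S = B"
  proof (rule mp_inverse_eqI)
    show "S ** B ** S = S"
      using into by (simp add: SB matrix_eq oblique_proj_fixes flip: matrix_vector_mul_assoc)
    show "B ** S ** B = B"
      using B_in by (simp add: BS matrix_eq oblique_proj_fixes flip: matrix_vector_mul_assoc)
  qed (simp_all add: SB BS transpose_orth_proj subspace_W)
  then show "S ** mp_inverse S = orth_proj W" "mp_inverse S ** S = orth_proj W"
    using SB BS by simp_all
qed

end

lemma integrable_outer:
  fixes f g :: "'a \<Rightarrow> real^'n"
  assumes "f \<in> borel_measurable M" "g \<in> borel_measurable M"
    and "integrable M (\<lambda>x. norm (f x) ^ 2)" "integrable M (\<lambda>x. norm (g x) ^ 2)"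
  shows "integrable M (\<lambda>x. outer (f x) (g x))"
proof (rule Bochner_Integration.integrable_bound)
  show "integrable M (\<lambda>x. norm (f x) ^ 2 + norm (g x) ^ 2)"
    using assms(3,4) by simp
  show "(\<lambda>x. outer (f x) (g x)) \<in> borel_measurable M"
    using assms(1,2) unfolding outer_def
    by (rule borel_measurable_continuous_Pair) (intro continuous_on_vec_lambda continuous_intros)
  have "norm (f x) * norm (g x) \<le> norm (f x) ^ 2 + norm (g x) ^ 2" for x
    using sum_squares_bound[of "norm (f x)" "norm (g x)"]
      mult_nonneg_nonneg[OF norm_ge_zero norm_ge_zero, of "f x" "g x"] by linarith
  then show "AE x in M. norm (outer (f x) (g x)) \<le> norm (norm (f x) ^ 2 + norm (g x) ^ 2)"
    by (simp add: norm_outer)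
qed

lemma bounded_linear_trace_mult: "bounded_linear (\<lambda>X. trace (K ** X))" for K :: "real^'n^'n"
proof -
  have "linear (\<lambda>X. trace (K ** X))"
    by (rule linearI) (simp_all add: trace_def matrix_matrix_mult_def sum.distrib sum_distrib_left
        algebra_simps)
  then show ?thesis
    by (simp add: linear_conv_bounded_linear)
qed

lemma integral_inner_matrix_vector:
  fixes f g :: "'a \<Rightarrow> real^'n"
  assumes "f \<in> borel_measurable M" "g \<in> borel_measurable M"
    and "integrable M (\<lambda>x. norm (f x) ^ 2)" "integrable M (\<lambda>x. norm (g x) ^ 2)"
  shows "integrable M (\<lambda>x. f x \<bullet> (K *v g x))"
    and "(\<integral>x. f x \<bullet> (K *v g x) \<partial>M) = trace (K ** (\<integral>x. outer (g x) (f x) \<partial>M))"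
proof -
  have outer: "integrable M (\<lambda>x. outer (g x) (f x))"
    using assms by (intro integrable_outer)
  have "(\<lambda>x. f x \<bullet> (K *v g x)) = (\<lambda>x. trace (K ** outer (g x) (f x)))"
    by (simp add: trace_mult_outer)
  then show "integrable M (\<lambda>x. f x \<bullet> (K *v g x))"
    and "(\<integral>x. f x \<bullet> (K *v g x) \<partial>M) = trace (K ** (\<integral>x. outer (g x) (f x) \<partial>M))"
    using integrable_bounded_linear[OF bounded_linear_trace_mult outer]
      integral_bounded_linear[OF bounded_linear_trace_mult outer] by simp_all
qed

lemma frame_operator_inner:
  assumes "sets \<mu> = sets borel" "integrable \<mu> (\<lambda>y. norm y ^ 2)"
  shows "u \<bullet> (frame_operator \<mu> *v v) = (\<integral>y. (u \<bullet> y) * (v \<bullet> y) \<partial>\<mu>)"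
proof -
  have id: "(\<lambda>y. y) \<in> borel_measurable \<mu>"
    using measurable_ident_sets[OF assms(1)] by simp
  have "u \<bullet> (frame_operator \<mu> *v v) = trace (outer v u ** frame_operator \<mu>)"
    by (simp add: trace_mult_outer trace_mul_sym[of "outer v u"])
  also have "\<dots> = (\<integral>y. y \<bullet> (outer v u *v y) \<partial>\<mu>)"
    using integral_inner_matrix_vector(2)[OF id id assms(2) assms(2)]
    by (simp add: frame_operator_def)
  finally show ?thesis
    by (simp add: outer_mult_vec mult.commute inner_commute)
qed

lemma frame_operator_inner_commute:
  assumes "sets \<mu> = sets borel" "integrable \<mu> (\<lambda>y. norm y ^ 2)"
  shows "u \<bullet> (frame_operator \<mu> *v v) = v \<bullet> (frame_operator \<mu> *v u)"
  using assms by (simp add: frame_operator_inner mult.commute)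

lemma frame_operator_quadratic:
  assumes "sets \<mu> = sets borel" "integrable \<mu> (\<lambda>y. norm y ^ 2)"
  shows "u \<bullet> (frame_operator \<mu> *v u) = (\<integral>x. \<bar>x \<bullet> u\<bar> ^ 2 \<partial>\<mu>)"
  using assms by (simp add: frame_operator_inner inner_commute power2_eq_square)

lemma frame_operator_orthogonal_comp:
  assumes "P2 W \<mu>" "z \<in> W\<^sup>\<bottom>"
  shows "frame_operator \<mu> *v z = 0"
proof -
  have "u \<bullet> (frame_operator \<mu> *v z) = 0" for u
  proof -
    have "AE y in \<mu>. (u \<bullet> y) * (z \<bullet> y) = 0"
      using assms by (auto simp: P2_def orthogonal_comp_def orthogonal_def inner_commute elim!: AE_mp)
    then show ?thesis
      using assms(1) by (simp add: P2_def frame_operator_inner integral_eq_zero_AE)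
  qed
  from this[of "frame_operator \<mu> *v z"] show ?thesis
    by simp
qed

lemma frame_operator_in:
  assumes "P2 W \<mu>" "subspace W"
  shows "frame_operator \<mu> *v x \<in> W"
proof -
  have "z \<bullet> (frame_operator \<mu> *v x) = 0" if "z \<in> W\<^sup>\<bottom>" for z
    using assms(1) frame_operator_orthogonal_comp[OF assms(1) that]
    by (simp add: P2_def frame_operator_inner_commute[of \<mu> z])
  then have "frame_operator \<mu> *v x \<in> W\<^sup>\<bottom>\<^sup>\<bottom>"
    by (simp add: orthogonal_comp_def orthogonal_def)
  then show ?thesis
    using assms(2) by (simp add: orthogonal_comp_self)
qed

lemma frame_operator_quadratic_eq_0:
  assumes "prob_frame W \<mu>" "subspace W" "h \<bullet> (frame_operator \<mu> *v h) = 0"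
  shows "h \<in> W\<^sup>\<bottom>"
proof -
  interpret complementary_subspaces W "W\<^sup>\<bottom>"
    using assms(2) by (rule complementary_orthogonal_comp_self)
  let ?S = "frame_operator \<mu>" and ?p = "orth_proj W *v h"
  have P2: "P2 W \<mu>" and sets: "sets \<mu> = sets borel" and int: "integrable \<mu> (\<lambda>y. norm y ^ 2)"
    using assms(1) by (simp_all add: prob_frame_def P2_def)
  obtain A where "A > 0" and lower: "A * norm ?p ^ 2 \<le> (\<integral>x. \<bar>?p \<bullet> x\<bar> ^ 2 \<partial>\<mu>)"
    using assms(1) oblique_proj_in unfolding prob_frame_def by blast
  have "?S *v ?p = ?S *v h"
    using frame_operator_orthogonal_comp[OF P2 oblique_proj_diff_in[of h]]
    by (simp add: matrix_vector_mult_diff_distrib)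
  then have "?p \<bullet> (?S *v ?p) = 0"
    using assms(3) frame_operator_inner_commute[OF sets int, of ?p h] by simp
  then have "A * norm ?p ^ 2 \<le> 0"
    using lower frame_operator_quadratic[OF sets int, of ?p] by (simp add: inner_commute)
  then have "?p = 0"
    using \<open>A > 0\<close> by (simp add: mult_le_0_iff)
  then show ?thesis
    using oblique_proj_diff_in[of h] by simp
qed

lemma continuous_on_matrix_vector_mult [continuous_intros]:
  "continuous_on X f \<Longrightarrow> continuous_on X (\<lambda>x. A *v f x)" for A :: "real^'n^'m"
  by (rule continuous_on_compose2[OF matrix_vector_mult_linear_continuous_on]) auto

locale oblique_dual_frame =
  fixes W V :: "(real^'n) set" and \<mu> :: "(real^'n) measure" and T :: "real^'n \<Rightarrow> real^'n"
  assumes subspace_W: "subspace W" and subspace_V: "subspace V"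
    and inter_eq_0: "W \<inter> V\<^sup>\<bottom> = {0}" and sum_eq_UNIV: "W + V\<^sup>\<bottom> = UNIV"
    and frame: "prob_frame W \<mu>"
    and measurable_T: "T \<in> borel_measurable \<mu>" and T_in: "\<forall>x\<in>W. T x \<in> V"
    and P2_T: "P2 V (distr \<mu> borel T)"
    and dual: "(\<integral>x. outer x (T x) \<partial>\<mu>) = oblique_proj W (V\<^sup>\<bottom>)"
begin

abbreviation "S \<equiv> frame_operator \<mu>"

abbreviation "canonical_dual \<equiv> oblique_proj V (W\<^sup>\<bottom>) ** mp_inverse S"

abbreviation "deviation y \<equiv> (T y - canonical_dual *v y) \<bullet> (S *v (T y - canonical_dual *v y))"

sublocale W_V: complementary_subspaces W "V\<^sup>\<bottom>"
  by unfold_locales (simp_all add: subspace_W subspace_orthogonal_comp inter_eq_0 sum_eq_UNIV)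

sublocale V_W: complementary_subspaces V "W\<^sup>\<bottom>"
  using complementary_orthogonal_comp[OF subspace_W subspace_V inter_eq_0 sum_eq_UNIV]
  by unfold_locales (simp_all add: subspace_V subspace_orthogonal_comp)

sublocale W_W: complementary_subspaces W "W\<^sup>\<bottom>"
  using subspace_W by (rule complementary_orthogonal_comp_self)

lemma P2_W: "P2 W \<mu>"
  using frame by (simp add: prob_frame_def)

lemma sets_\<mu>: "sets \<mu> = sets borel"
  and integrable_norm2: "integrable \<mu> (\<lambda>y. norm y ^ 2)"
  and AE_in_W: "AE y in \<mu>. y \<in> W"
  using P2_W by (simp_all add: P2_def)

lemma measurable_id: "(\<lambda>y. y) \<in> borel_measurable \<mu>"
  using measurable_ident_sets[OF sets_\<mu>] by simp

lemma integrable_norm2_T: "integrable \<mu> (\<lambda>y. norm (T y) ^ 2)"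
  using P2_T integrable_distr_eq[OF measurable_T, of "\<lambda>x. norm x ^ 2"] by (simp add: P2_def)

lemma S_inner_commute: "u \<bullet> (S *v v) = v \<bullet> (S *v u)"
  using frame_operator_inner_commute[OF sets_\<mu> integrable_norm2] .

lemma S_orthogonal_comp: "z \<in> W\<^sup>\<bottom> \<Longrightarrow> S *v z = 0"
  using frame_operator_orthogonal_comp[OF P2_W] .

lemma mp_inverse_S: "S ** mp_inverse S = orth_proj W" "mp_inverse S ** S = orth_proj W"
proof -
  have "w = 0" if "w \<in> W" "S *v w = 0" for w
    using frame_operator_quadratic_eq_0[OF frame subspace_W, of w] that
      orthogonal_Int_0[OF subspace_W] by auto
  then show "S ** mp_inverse S = orth_proj W" "mp_inverse S ** S = orth_proj W"
    using mult_mp_inverse_eq_orth_proj[OF subspace_W frame_operator_in[OF P2_W subspace_W]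
        S_orthogonal_comp] by blast+
qed

lemma integral_inner_T: "integrable \<mu> (\<lambda>y. T y \<bullet> y)" "(\<integral>y. T y \<bullet> y \<partial>\<mu>) = dim W"
proof -
  have "trace (oblique_proj W (V\<^sup>\<bottom>)) = dim W"
    using subspace_W W_V.oblique_proj_in W_V.oblique_proj_fixes by (rule trace_eq_dim)
  then show "integrable \<mu> (\<lambda>y. T y \<bullet> y)" "(\<integral>y. T y \<bullet> y \<partial>\<mu>) = dim W"
    using integral_inner_matrix_vector[OF measurable_T measurable_id integrable_norm2_T
        integrable_norm2, of "mat 1"] by (simp_all add: dual)
qed

lemma integral_inner_mp_inverse:
  "integrable \<mu> (\<lambda>y. y \<bullet> (mp_inverse S *v y))" "(\<integral>y. y \<bullet> (mp_inverse S *v y) \<partial>\<mu>) = dim W"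
proof -
  have "trace (orth_proj W) = dim W"
    using subspace_W W_W.oblique_proj_in W_W.oblique_proj_fixes by (rule trace_eq_dim)
  then show "integrable \<mu> (\<lambda>y. y \<bullet> (mp_inverse S *v y))"
    "(\<integral>y. y \<bullet> (mp_inverse S *v y) \<partial>\<mu>) = dim W"
    using integral_inner_matrix_vector[OF measurable_id measurable_id integrable_norm2
        integrable_norm2, of "mp_inverse S"] by (simp_all add: frame_operator_def[symmetric] mp_inverse_S)
qed

lemma deviation_expand:
  assumes "y \<in> W"
  shows "(t - canonical_dual *v y) \<bullet> (S *v (t - canonical_dual *v y))
    = t \<bullet> (S *v t) - 2 * (t \<bullet> y) + y \<bullet> (mp_inverse S *v y)"
proof -
  let ?b = "mp_inverse S *v y"
  let ?k = "oblique_proj V (W\<^sup>\<bottom>) *v ?b"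
  have "S *v ?k = S *v ?b"
    using S_orthogonal_comp[OF V_W.oblique_proj_diff_in[of ?b]]
    by (simp add: matrix_vector_mult_diff_distrib)
  also have "\<dots> = y"
    using W_W.oblique_proj_fixes[OF assms] by (simp add: matrix_vector_mul_assoc mp_inverse_S)
  finally have Sk: "S *v ?k = y" .
  have "y \<bullet> (?b - ?k) = 0"
    using V_W.oblique_proj_diff_in[of ?b] assms by (simp add: orthogonal_comp_def orthogonal_def)
  then have "?k \<bullet> (S *v ?k) = y \<bullet> ?b"
    by (simp add: Sk inner_diff_right inner_commute)
  moreover have "?k \<bullet> (S *v t) = t \<bullet> y"
    using S_inner_commute[of ?k t] by (simp add: Sk)
  moreover have "canonical_dual *v y = ?k"
    by (simp add: matrix_vector_mul_assoc)
  ultimately show ?thesis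
    using S_inner_commute[of t ?k]
    by (simp add: Sk matrix_vector_mult_diff_distrib inner_diff_left inner_diff_right)
qed

lemma deviation_nonneg: "0 \<le> deviation y"
  unfolding frame_operator_quadratic[OF sets_\<mu> integrable_norm2] by (rule integral_nonneg_AE) simp

lemma deviation_eq_0_iff:
  assumes "y \<in> W"
  shows "deviation y = 0 \<longleftrightarrow> T y = canonical_dual *v y"
proof
  have "canonical_dual *v y \<in> V"
    using V_W.oblique_proj_in by (simp flip: matrix_vector_mul_assoc)
  then have "T y - canonical_dual *v y \<in> V"
    using T_in assms subspace_V by (simp add: subspace_diff)
  moreover assume "deviation y = 0"
  then have "T y - canonical_dual *v y \<in> W\<^sup>\<bottom>"
    by (rule frame_operator_quadratic_eq_0[OF frame subspace_W])
  ultimately have "T y - canonical_dual *v y = 0"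
    using V_W.inter_eq_0 by blast
  then show "T y = canonical_dual *v y"
    by simp
qed simp

lemma integral_deviation:
  "integrable \<mu> deviation" "integral\<^sup>L \<mu> deviation = (\<integral>y. T y \<bullet> (S *v T y) \<partial>\<mu>) - dim W"
proof -
  let ?expansion = "\<lambda>y. T y \<bullet> (S *v T y) - 2 * (T y \<bullet> y) + y \<bullet> (mp_inverse S *v y)"
  have AE_eq: "AE y in \<mu>. deviation y = ?expansion y"
    using AE_in_W by eventually_elim (rule deviation_expand)
  have measurable: "deviation \<in> borel_measurable \<mu>"
    using measurable_T measurable_id
    by (rule borel_measurable_continuous_Pair) (intro continuous_intros)
  have quadratic: "integrable \<mu> (\<lambda>y. T y \<bullet> (S *v T y))"
    using integral_inner_matrix_vector(1)[OF measurable_T measurable_T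
        integrable_norm2_T integrable_norm2_T] .
  then have expansion: "integrable \<mu> ?expansion"
    using integral_inner_T(1) integral_inner_mp_inverse(1) by simp
  then show "integrable \<mu> deviation"
    using integrable_cong_AE[OF measurable borel_measurable_integrable AE_eq] by simp
  have "integral\<^sup>L \<mu> deviation = integral\<^sup>L \<mu> ?expansion"
    using integral_cong_AE[OF measurable borel_measurable_integrable[OF expansion] AE_eq] .
  also have "\<dots> = (\<integral>y. T y \<bullet> (S *v T y) \<partial>\<mu>) - dim W"
    using quadratic integral_inner_T integral_inner_mp_inverse by simp
  finally show "integral\<^sup>L \<mu> deviation = (\<integral>y. T y \<bullet> (S *v T y) \<partial>\<mu>) - dim W" .
qed

end

theorem theorem5p3:
  fixes W V :: "(real^'n) set" and \<mu> :: "(real^'n) measure" and T :: "real^'n \<Rightarrow> real^'n"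
  assumes "subspace W" and "subspace V"
    and "W \<inter> orthogonal_comp V = {0}" and "W + orthogonal_comp V = UNIV"
    and "prob_frame W \<mu>"
    and "T \<in> borel_measurable \<mu>" and "\<forall>x\<in>W. T x \<in> V"
    and "P2 V (distr \<mu> borel T)"
    and "integral\<^sup>L \<mu> (\<lambda>x. outer x (T x)) = oblique_proj W (orthogonal_comp V)"
  shows "integral\<^sup>L \<mu> (\<lambda>y. integral\<^sup>L \<mu> (\<lambda>x. \<bar>x \<bullet> T y\<bar> ^ 2)) \<ge> real (dim W) \<and>
         (integral\<^sup>L \<mu> (\<lambda>y. integral\<^sup>L \<mu> (\<lambda>x. \<bar>x \<bullet> T y\<bar> ^ 2)) = real (dim W) \<longleftrightarrow>
         (AE y in \<mu>. T y = (oblique_proj V (orthogonal_comp W) ** mp_inverse (frame_operator \<mu>)) *v y))"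
proof -
  interpret oblique_dual_frame W V \<mu> T
    using assms by unfold_locales
  have inner_integral: "(\<lambda>y. \<integral>x. \<bar>x \<bullet> T y\<bar> ^ 2 \<partial>\<mu>) = (\<lambda>y. T y \<bullet> (S *v T y))"
    by (simp add: frame_operator_quadratic[OF sets_\<mu> integrable_norm2])
  have "0 \<le> integral\<^sup>L \<mu> deviation"
    by (rule integral_nonneg_AE) (simp add: deviation_nonneg)
  moreover have "integral\<^sup>L \<mu> deviation = 0 \<longleftrightarrow> (AE y in \<mu>. deviation y = 0)"
    using integral_deviation(1) by (rule integral_nonneg_eq_0_iff_AE) (simp add: deviation_nonneg)
  moreover have "\<dots> \<longleftrightarrow> (AE y in \<mu>. T y = canonical_dual *v y)"
    using AE_in_W by (rule eventually_cong) (rule deviation_eq_0_iff)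
  ultimately show ?thesis
    unfolding inner_integral using integral_deviation(2) by linarith
qed

end
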